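(* Let $G$ be a $k$-uniform tight cycle (an $s$-cycle with $s=k-1$), with $m=n$ edges and vertices. Then $G$ is regular. Assume further that $k$ is even and write $k=2^{t_0}(2l_0+1)$ with nonnegative integers $t_0,l_0$. Then $G$ is odd-bipartite if and only if $m=n$ is a multiple of $2^{t_0}$.
   Context: A $k$-uniform $s$-cycle with $m$ edges has vertex set $\mathbb{Z}_n$, $n=m(k-s)$ (vertex $n+i$ identified with $i$), and edges $e_j=\{j(k-s)+1,\ldots,j(k-s)+k\}$, $j=0,\ldots,m-1$; it is assumed that $n\ge 2k-s$ (for $s=k-1$: $n=m\ge k+1$). A hypergraph is regular if all vertex degrees are equal. A $k$-uniform hypergraph with $k$ even and vertex set $V$ is odd-bipartite if either it has no edges or there is a partition $V=V_1\cup V_2$ with $V_1,V_2\ne\emptyset$ such that every edge intersects $V_1$ in an odd number of vertices. *)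

theory Defs
  imports Main
begin

text \<open>Vertex set Z_n is represented as {0..<n}, vertex i read modulo n.\<close>

definition s_cycle_vertices :: "nat \<Rightarrow> nat \<Rightarrow> nat \<Rightarrow> nat set" where
  "s_cycle_vertices k s m = {0..<m * (k - s)}"

definition s_cycle_edges :: "nat \<Rightarrow> nat \<Rightarrow> nat \<Rightarrow> nat set set" where
  "s_cycle_edges k s m =
     {{(j * (k - s) + i) mod (m * (k - s)) | i. 1 \<le> i \<and> i \<le> k} | j. j < m}"

definition hdegree :: "'a set set \<Rightarrow> 'a \<Rightarrow> nat" where
  "hdegree E v = card {e \<in> E. v \<in> e}"

definition hregular :: "'a set \<Rightarrow> 'a set set \<Rightarrow> bool" where
  "hregular V E \<longleftrightarrow> (\<forall>u\<in>V. \<forall>v\<in>V. hdegree E u = hdegree E v)"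

definition odd_bipartite :: "'a set \<Rightarrow> 'a set set \<Rightarrow> bool" where
  "odd_bipartite V E \<longleftrightarrow> E = {} \<or>
     (\<exists>V1 V2. V = V1 \<union> V2 \<and> V1 \<inter> V2 = {} \<and> V1 \<noteq> {} \<and> V2 \<noteq> {} \<and>
        (\<forall>e\<in>E. odd (card (e \<inter> V1))))"

end

theory Submission
  imports Defs
begin

text \<open>
  Rotation \<open>x \<mapsto> x + 1\<close> of \<open>\<int>\<^sub>n\<close> permutes the edges of the tight cycle, so all vertices
  have the same degree. For a vertex set \<open>V\<^sub>1\<close> meeting every edge oddly, two consecutive
  edges differ in one vertex at each end, so membership in \<open>V\<^sub>1\<close> is \<open>k\<close>-periodic as well as
  \<open>n\<close>-periodic, hence \<open>g\<close>-periodic for \<open>g = gcd k n\<close>. An edge then consists of \<open>k/g\<close> copies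
  of one period, so \<open>k/g\<close> is odd and \<open>2^t\<^sub>0\<close> divides \<open>g\<close>, hence \<open>n\<close>. Conversely, if
  \<open>2^t\<^sub>0\<close> divides \<open>n\<close>, the multiples of \<open>2^t\<^sub>0\<close> meet each edge in \<open>2l\<^sub>0 + 1\<close> vertices.
\<close>

definition tight_edge :: "nat \<Rightarrow> nat \<Rightarrow> nat \<Rightarrow> nat set" where
  "tight_edge n k j = {(j + i) mod n | i. 1 \<le> i \<and> i \<le> k}"

lemma s_cycle_vertices_tight: "1 \<le> k \<Longrightarrow> s_cycle_vertices k (k - 1) n = {0..<n}"
  by (simp add: s_cycle_vertices_def)

lemma s_cycle_edges_tight: "1 \<le> k \<Longrightarrow> s_cycle_edges k (k - 1) n = tight_edge n k ` {..<n}"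
  by (auto simp: s_cycle_edges_def tight_edge_def)

lemma tight_edge_mod: "tight_edge n k (j mod n) = tight_edge n k j"
  unfolding tight_edge_def by (metis mod_add_left_eq)

lemma tight_edge_subset: "0 < n \<Longrightarrow> tight_edge n k j \<subseteq> {0..<n}"
  unfolding tight_edge_def by auto

lemma image_rotate_tight_edge:
  "(\<lambda>x. Suc x mod n) ` tight_edge n k j = tight_edge n k (Suc j)"
  unfolding tight_edge_def by (auto simp: image_def mod_Suc_eq)

lemma hdegree_image_eq:
  assumes "inj_on r V" and "\<forall>e\<in>E. e \<subseteq> V" and "image r ` E = E" and "v \<in> V"
  shows "hdegree E (r v) = hdegree E v"
proof -
  have "{e \<in> E. r v \<in> e} = image r ` {e \<in> E. v \<in> e}"
  proof (intro equalityI subsetI)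
    fix e assume "e \<in> {e \<in> E. r v \<in> e}"
    moreover from this obtain e' where "e' \<in> E" "e = r ` e'"
      using assms(3) by (metis (mono_tags, lifting) image_iff mem_Collect_eq)
    ultimately show "e \<in> image r ` {e \<in> E. v \<in> e}"
      using assms(1,2,4) by (auto dest: inj_onD)
  qed (use assms(3) in auto)
  moreover have "inj_on (image r) {e \<in> E. v \<in> e}"
    using assms(1,2) by (auto intro!: inj_onI simp: inj_on_image_eq_iff)
  ultimately show ?thesis
    unfolding hdegree_def by (simp add: card_image)
qed

lemma hregular_if_rotation_invariant:
  assumes "\<forall>e\<in>E. e \<subseteq> {0..<n}" and "image (\<lambda>x. Suc x mod n) ` E = E"
  shows "hregular {0..<n} E"
proof -
  have inj: "inj_on (\<lambda>x. Suc x mod n) {0..<n}"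
    by (rule inj_onI) (auto simp: mod_Suc split: if_splits)
  have "hdegree E v = hdegree E 0" if "v < n" for v
    using that
  proof (induction v)
    case (Suc v)
    have "hdegree E (Suc v mod n) = hdegree E v"
      using hdegree_image_eq[OF inj assms, of v] Suc.prems by simp
    with Suc show ?case by simp
  qed simp
  then show ?thesis
    unfolding hregular_def by (metis atLeastLessThan_iff)
qed

lemma rotate_tight_edges:
  assumes "0 < n"
  shows "image (\<lambda>x. Suc x mod n) ` (tight_edge n k ` {..<n}) = tight_edge n k ` {..<n}"
proof -
  have "tight_edge n k ` Suc ` {..<n} = tight_edge n k ` {..<n}"
  proof (intro equalityI subsetI)
    fix e assume "e \<in> tight_edge n k ` Suc ` {..<n}"
    then obtain j where "e = tight_edge n k (Suc j)" by blast
    then show "e \<in> tight_edge n k ` {..<n}"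
      using assms by (metis imageI lessThan_iff mod_less_divisor tight_edge_mod)
  next
    fix e assume "e \<in> tight_edge n k ` {..<n}"
    then obtain j where j: "j < n" "e = tight_edge n k j" by blast
    have "e = tight_edge n k (Suc ((j + n - 1) mod n))"
      using assms j by (metis Suc_diff_1 add_gr_0 mod_add_self2 mod_Suc_eq tight_edge_mod)
    then show "e \<in> tight_edge n k ` Suc ` {..<n}"
      using assms by auto
  qed
  then show ?thesis
    by (simp add: image_image image_rotate_tight_edge)
qed

lemma hregular_tight_cycle: "0 < n \<Longrightarrow> hregular {0..<n} (tight_edge n k ` {..<n})"
  by (intro hregular_if_rotation_invariant rotate_tight_edges) (auto dest: tight_edge_subset)

lemma card_tight_edge_inter:
  assumes "k \<le> n"
  shows "card (tight_edge n k j \<inter> A) = card {i \<in> {Suc j..<Suc j + k}. i mod n \<in> A}"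
proof -
  have "tight_edge n k j \<inter> A = (\<lambda>i. i mod n) ` {i \<in> {Suc j..<Suc j + k}. i mod n \<in> A}"
    unfolding tight_edge_def
  proof (intro equalityI subsetI)
    fix x assume "x \<in> {(j + i) mod n | i. 1 \<le> i \<and> i \<le> k} \<inter> A"
    then obtain i where "1 \<le> i" "i \<le> k" "x = (j + i) mod n" "x \<in> A" by blast
    then show "x \<in> (\<lambda>i. i mod n) ` {i \<in> {Suc j..<Suc j + k}. i mod n \<in> A}"
      by (intro image_eqI[of _ _ "j + i"]) auto
  next
    fix x assume "x \<in> (\<lambda>i. i mod n) ` {i \<in> {Suc j..<Suc j + k}. i mod n \<in> A}"
    then obtain i where "Suc j \<le> i" "i < Suc j + k" "x = i mod n" "x \<in> A" by auto
    then show "x \<in> {(j + i) mod n | i. 1 \<le> i \<and> i \<le> k} \<inter> A"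
      by (auto intro!: exI[of _ "i - j"])
  qed
  moreover have "inj_on (\<lambda>i. i mod n) {Suc j..<Suc j + k}"
  proof (rule inj_onI)
    fix a b assume ab: "a \<in> {Suc j..<Suc j + k}" "b \<in> {Suc j..<Suc j + k}" and "a mod n = b mod n"
    then have "n dvd b - a" "n dvd a - b"
      by (metis mod_eq_dvd_iff_nat nat_le_linear diff_is_0_eq dvd_0_right)+
    moreover have "b - a < n" "a - b < n"
      using ab assms by auto
    ultimately show "a = b"
      by (metis dvd_imp_le diff_is_0_eq le_antisym not_le zero_less_diff)
  qed
  ultimately show ?thesis
    by (metis (no_types, lifting) card_image inj_on_subset mem_Collect_eq subsetI)
qed

lemma periodic_add_mult:
  fixes F :: "nat \<Rightarrow> 'a"
  assumes "\<And>x. F (x + p) = F x"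
  shows "F (x + q * p) = F x"
  by (induction q) (simp_all, metis assms add.assoc add.commute)

lemma periodic_gcd:
  fixes F :: "nat \<Rightarrow> 'a"
  assumes "\<And>x. F (x + p) = F x" and "\<And>x. F (x + q) = F x" and "p \<noteq> 0"
  shows "F (x + gcd p q) = F x"
proof -
  obtain a b where ab: "p * a = q * b + gcd p q"
    using bezout_nat[OF \<open>p \<noteq> 0\<close>] by blast
  have "F (x + gcd p q) = F (x + gcd p q + b * q)"
    using periodic_add_mult[of F q] assms(2) by metis
  also have "\<dots> = F (x + a * p)"
    using ab by (simp add: algebra_simps)
  also have "\<dots> = F x"
    using periodic_add_mult[of F p] assms(1) by metis
  finally show ?thesis .
qed

lemma sum_window_Suc:
  fixes F :: "nat \<Rightarrow> 'a::comm_monoid_add"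
  shows "F y + sum F {Suc y..<Suc y + p} = sum F {y..<y + p} + F (y + p)"
proof -
  have "sum F {y..<Suc y + p} = F y + sum F {Suc y..<Suc y + p}"
    by (simp add: sum.atLeast_Suc_lessThan add.assoc)
  also have "sum F {y..<Suc y + p} = sum F {y..<y + p} + F (y + p)"
    by simp
  finally show ?thesis ..
qed

lemma sum_periodic_shift:
  fixes F :: "nat \<Rightarrow> 'a::cancel_comm_monoid_add"
  assumes "\<And>x. F (x + p) = F x"
  shows "sum F {y..<y + p} = sum F {..<p}"
proof (induction y)
  case (Suc y)
  with sum_window_Suc[of F y p] assms[of y] show ?case
    by (simp add: add.commute)
qed (simp add: atLeast0LessThan)

lemma sum_periodic_blocks:
  fixes F :: "nat \<Rightarrow> 'a::comm_semiring_1_cancel"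
  assumes "\<And>x. F (x + p) = F x"
  shows "sum F {y..<y + q * p} = of_nat q * sum F {..<p}"
proof (induction q)
  case (Suc q)
  have "sum F {y..<y + Suc q * p} = sum F {y..<y + q * p} + sum F {y + q * p..<y + q * p + p}"
    by (simp add: sum.atLeastLessThan_concat ac_simps)
  also have "sum F {y + q * p..<y + q * p + p} = sum F {..<p}"
    using sum_periodic_shift[of F p] assms by blast
  finally show ?case
    using Suc by (simp add: algebra_simps)
qed simp

lemma periodic_if_odd_window_sums:
  fixes F :: "nat \<Rightarrow> nat"
  assumes "\<And>x. F x \<le> 1" and "\<And>y. odd (sum F {y..<y + k})"
  shows "F (x + k) = F x"
proof -
  have "odd (sum F {x..<x + k})" "odd (sum F {Suc x..<Suc x + k})"
    using assms(2) by blast+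
  moreover have "\<And>a b u v :: nat. u + a = b + v \<Longrightarrow> odd b \<Longrightarrow> odd a \<Longrightarrow> u \<le> 1 \<Longrightarrow> v \<le> 1 \<Longrightarrow> v = u"
    by presburger
  ultimately show ?thesis
    using sum_window_Suc[of F x k] assms(1)[of x] assms(1)[of "x + k"] by blast
qed

lemma pow2_dvd_if_odd_window_sums:
  fixes F :: "nat \<Rightarrow> nat"
  assumes "\<And>x. F x \<le> 1" and "\<And>x. F (x + n) = F x"
    and "\<And>y. odd (sum F {y..<y + k})" and "2 ^ t dvd k"
  shows "2 ^ t dvd n"
proof -
  define g where "g = gcd k n"
  have "k \<noteq> 0"
    using assms(3)[of 0] by (intro notI) simp
  then have "F (x + g) = F x" for x
    unfolding g_def using periodic_gcd periodic_if_odd_window_sums assms(1-3) by metis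
  then have "sum F {0..<(k div g) * g} = (k div g) * sum F {..<g}"
    using sum_periodic_blocks[of F g 0 "k div g"] by simp
  then have "odd (k div g)"
    using assms(3)[of 0] by (simp add: g_def)
  moreover have "2 ^ t dvd (k div g) * g"
    using assms(4) by (simp add: g_def)
  ultimately have "2 ^ t dvd g"
    by (simp add: coprime_dvd_mult_right_iff)
  then show ?thesis
    unfolding g_def using dvd_trans gcd_dvd2 by blast
qed

lemma card_multiples_window:
  assumes "0 < d"
  shows "card {i \<in> {y..<y + q * d}. d dvd i} = q"
proof -
  have "{..<d} \<inter> {i. d dvd i} = {0}"
    using assms by (auto dest: dvd_imp_le)
  then show ?thesis
    using sum_periodic_blocks[of "\<lambda>i. of_bool (d dvd i) :: nat" d y q] by (simp add: Int_def)
qed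

lemma odd_bipartite_tight_cycle_iff:
  assumes "k < n" and "even k" and k: "k = 2 ^ t * (2 * l + 1)"
  shows "odd_bipartite {0..<n} (tight_edge n k ` {..<n}) \<longleftrightarrow> 2 ^ t dvd n"
proof
  assume "odd_bipartite {0..<n} (tight_edge n k ` {..<n})"
  moreover have "tight_edge n k ` {..<n} \<noteq> {}"
    using assms(1) by auto
  ultimately obtain V1 where V1: "\<forall>e \<in> tight_edge n k ` {..<n}. odd (card (e \<inter> V1))"
    unfolding odd_bipartite_def by blast
  define F where "F x = (of_bool (x mod n \<in> V1) :: nat)" for x
  have "odd (sum F {y..<y + k})" for y
  proof -
    have "tight_edge n k (y + n - 1) \<in> tight_edge n k ` {..<n}"
      using assms(1) by (metis imageI lessThan_iff mod_less_divisor tight_edge_mod gr_implies_not0 neq0_conv)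
    then have "odd (card (tight_edge n k (y + n - 1) \<inter> V1))"
      using V1 by blast
    also have "card (tight_edge n k (y + n - 1) \<inter> V1) = card {i \<in> {y + n..<y + n + k}. i mod n \<in> V1}"
      using card_tight_edge_inter[of k n "y + n - 1" V1] assms(1) by simp
    also have "\<dots> = sum F {y + n..<y + k + n}"
      by (simp add: F_def Int_def ac_simps)
    also have "\<dots> = sum F {y..<y + k}"
      by (simp add: sum.shift_bounds_nat_ivl F_def)
    finally show ?thesis .
  qed
  moreover have "2 ^ t dvd k"
    using k by simp
  ultimately show "2 ^ t dvd n"
    using pow2_dvd_if_odd_window_sums[of F n k t] by (simp add: F_def)
next
  assume dvd: "2 ^ t dvd n"
  define V1 where "V1 = {x \<in> {0..<n}. 2 ^ t dvd x}"
  define V2 where "V2 = {x \<in> {0..<n}. \<not> 2 ^ t dvd x}"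
  have "odd (card (e \<inter> V1))" if edge: "e \<in> tight_edge n k ` {..<n}" for e
  proof -
    obtain j where e: "e = tight_edge n k j"
      using edge by blast
    have "card (e \<inter> V1) = card {i \<in> {Suc j..<Suc j + k}. i mod n \<in> V1}"
      unfolding e using assms(1) by (simp add: card_tight_edge_inter)
    also have "\<dots> = card {i \<in> {Suc j..<Suc j + (2 * l + 1) * 2 ^ t}. 2 ^ t dvd i}"
      using dvd assms(1) k by (simp add: V1_def dvd_mod_iff mult.commute)
    also have "\<dots> = 2 * l + 1"
      by (rule card_multiples_window) simp
    finally show ?thesis
      by simp
  qed
  moreover have "1 \<in> V2"
  proof -
    have "t \<noteq> 0" and "0 < k"
      using assms(2) k by auto
    with assms(1) show ?thesis
      by (simp add: V2_def)
  qed
  moreover have "0 \<in> V1"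
    using assms(1) by (simp add: V1_def)
  moreover have "{0..<n} = V1 \<union> V2" and "V1 \<inter> V2 = {}"
    by (auto simp: V1_def V2_def)
  ultimately show "odd_bipartite {0..<n} (tight_edge n k ` {..<n})"
    unfolding odd_bipartite_def by blast
qed

theorem corollary4p2:
  fixes k n t0 l0 :: nat
  assumes "n \<ge> k + 1"
  shows "hregular (s_cycle_vertices k (k - 1) n) (s_cycle_edges k (k - 1) n) \<and>
         (even k \<and> k = 2 ^ t0 * (2 * l0 + 1) \<longrightarrow>
           (odd_bipartite (s_cycle_vertices k (k - 1) n) (s_cycle_edges k (k - 1) n)
             \<longleftrightarrow> 2 ^ t0 dvd n))"
proof (cases "k = 0")
  case True
  then show ?thesis
    by (simp add: s_cycle_vertices_def hregular_def)
next
  case False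
  then have "1 \<le> k"
    by simp
  then have V: "s_cycle_vertices k (k - 1) n = {0..<n}"
    and E: "s_cycle_edges k (k - 1) n = tight_edge n k ` {..<n}"
    by (rule s_cycle_vertices_tight, rule s_cycle_edges_tight)
  have "k < n"
    using assms by simp
  then show ?thesis
    unfolding V E using hregular_tight_cycle odd_bipartite_tight_cycle_iff by (metis gr_implies_not0 neq0_conv)
qed

end
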